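(* For any Markov system $\mathbb{M}=(a,b,[a],[b],[b^{-1}])$, the gaps of $X_\infty$ (components of $S^1\setminus X_\infty$) form a single orbit under the action of $\mathbb{G}(\mathbb{M})$.
   Context: A Markov system is a tuple $(a,b,[a],[b],[b^{-1}])$ with $a$ an orientation-preserving involution of $S^1$, $b$ an orientation-preserving homeomorphism of $S^1$ of period three, and $[a],[b],[b^{-1}]\subset S^1$ such that: (A) they are pairwise disjoint, each a union of $k$ disjoint closed intervals ($k\in\mathbb{N}$); components are $a$-, $b$-, $b^{-1}$-intervals; $X=[a]\cup[b]\cup[b^{-1}]$; (B) no two $a$-intervals are consecutive among the components of $X$ in circular order; likewise for $b$- and for $b^{-1}$-intervals; with principal gaps (gaps of $X$ between an $a$-interval and a $b^{\pm1}$-interval), complementary gaps (between a $b$- and a $b^{-1}$-interval), $b$-blocks (maximal intervals made of $b^{\pm1}$-intervals and complementary gaps) and $[[b]]$ the union of $b$-blocks: (C) $a([a])=[[b]]$; (D) $b([a])=[b]$, $b([b])=[b^{-1}]$; (E) $a$ maps principal gaps to principal gaps and exactly one of $b^{\pm1}$ maps a given principal gap to a principal gap; the graph on principal gaps joining $J$ to $a(J)$ and to that image is connected. $\mathbb{G}(\mathbb{M})$ is the subgroup of $\mathrm{Homeo}_+(S^1)$ generated by $a$ and $b$, and $X_\infty=\bigcap_{f\in\mathbb{G}(\mathbb{M})}f^{-1}(X)$. *)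

theory Defs
  imports "HOL-Analysis.Analysis"
begin

definition S1 :: "complex set" where
  "S1 = sphere 0 1"

text \<open>ccw x y z: the points x, y, z of the circle occur in this (counterclockwise)
  circular order, i.e. the triangle x y z is positively oriented.\<close>
definition ccw :: "complex \<Rightarrow> complex \<Rightarrow> complex \<Rightarrow> bool" where
  "ccw x y z \<longleftrightarrow> Im (cnj (y - x) * (z - x)) > 0"

definition carc :: "complex \<Rightarrow> complex \<Rightarrow> complex set" where
  "carc u v = {z \<in> S1. z = u \<or> z = v \<or> ccw u z v}"

definition is_closed_interval :: "complex set \<Rightarrow> bool" where
  "is_closed_interval I \<longleftrightarrow> (\<exists>u\<in>S1. \<exists>v\<in>S1. u \<noteq> v \<and> I = carc u v)"

definition union_of_intervals :: "nat \<Rightarrow> complex set \<Rightarrow> bool" where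
  "union_of_intervals k A \<longleftrightarrow>
     (\<exists>\<I>. finite \<I> \<and> card \<I> = k \<and> (\<forall>I\<in>\<I>. is_closed_interval I)
          \<and> pairwise disjnt \<I> \<and> A = \<Union>\<I>)"

definition homeo_plus :: "(complex \<Rightarrow> complex) \<Rightarrow> bool" where
  "homeo_plus f \<longleftrightarrow> (\<exists>g. homeomorphism S1 S1 f g) \<and>
     (\<forall>x\<in>S1. \<forall>y\<in>S1. \<forall>z\<in>S1. ccw x y z \<longrightarrow> ccw (f x) (f y) (f z))"

definition gaps :: "complex set \<Rightarrow> complex set set" where
  "gaps Y = components (S1 - Y)"

definition between :: "complex set \<Rightarrow> complex set \<Rightarrow> complex set \<Rightarrow> bool" where
  "between J I1 I2 \<longleftrightarrow> I1 \<noteq> I2 \<and> closure J \<inter> I1 \<noteq> {} \<and> closure J \<inter> I2 \<noteq> {}"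

definition principal_gaps :: "complex set \<Rightarrow> complex set \<Rightarrow> complex set \<Rightarrow> complex set set" where
  "principal_gaps A B Bi = {J \<in> gaps (A \<union> B \<union> Bi).
     \<exists>I1\<in>components A. \<exists>I2\<in>components B \<union> components Bi. between J I1 I2}"

definition complementary_gaps :: "complex set \<Rightarrow> complex set \<Rightarrow> complex set \<Rightarrow> complex set set" where
  "complementary_gaps A B Bi = {J \<in> gaps (A \<union> B \<union> Bi).
     \<exists>I1\<in>components B. \<exists>I2\<in>components Bi. between J I1 I2}"

definition bblocks_union :: "complex set \<Rightarrow> complex set \<Rightarrow> complex set \<Rightarrow> complex set" where
  "bblocks_union A B Bi = B \<union> Bi \<union> \<Union>(complementary_gaps A B Bi)"

definition no_two_consecutive :: "complex set \<Rightarrow> complex set \<Rightarrow> bool" where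
  "no_two_consecutive X C \<longleftrightarrow>
     \<not> (\<exists>J\<in>gaps X. \<exists>I1\<in>components C. \<exists>I2\<in>components C. between J I1 I2)"

definition markov_system ::
  "(complex \<Rightarrow> complex) \<Rightarrow> (complex \<Rightarrow> complex) \<Rightarrow> complex set \<Rightarrow> complex set \<Rightarrow> complex set \<Rightarrow> bool" where
  "markov_system a b A B Bi \<longleftrightarrow>
     homeo_plus a \<and> (\<forall>x\<in>S1. a (a x) = x) \<and> (\<exists>x\<in>S1. a x \<noteq> x) \<and>
     homeo_plus b \<and> (\<forall>x\<in>S1. b (b (b x)) = x) \<and> (\<exists>x\<in>S1. b x \<noteq> x) \<and>
     \<comment> \<open>(A)\<close>
     disjnt A B \<and> disjnt A Bi \<and> disjnt B Bi \<and>
     (\<exists>k. union_of_intervals k A \<and> union_of_intervals k B \<and> union_of_intervals k Bi) \<and>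
     \<comment> \<open>(B)\<close>
     no_two_consecutive (A \<union> B \<union> Bi) A \<and>
     no_two_consecutive (A \<union> B \<union> Bi) B \<and>
     no_two_consecutive (A \<union> B \<union> Bi) Bi \<and>
     \<comment> \<open>(C)\<close>
     a ` A = bblocks_union A B Bi \<and>
     \<comment> \<open>(D)\<close>
     b ` A = B \<and> b ` B = Bi \<and>
     \<comment> \<open>(E)\<close>
     (let P = principal_gaps A B Bi; bi = inv_into S1 b;
          E = {(J, a ` J) | J. J \<in> P} \<union> {(J, b ` J) | J. J \<in> P \<and> b ` J \<in> P}
              \<union> {(J, bi ` J) | J. J \<in> P \<and> bi ` J \<in> P}
      in (\<forall>J\<in>P. a ` J \<in> P) \<and>
         (\<forall>J\<in>P. (b ` J \<in> P) \<noteq> (bi ` J \<in> P)) \<and>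
         (\<forall>J\<in>P. \<forall>K\<in>P. (J, K) \<in> (E \<union> E\<inverse>)\<^sup>*))"

inductive_set markov_group :: "(complex \<Rightarrow> complex) \<Rightarrow> (complex \<Rightarrow> complex) \<Rightarrow> (complex \<Rightarrow> complex) set"
  for a b where
  id: "id \<in> markov_group a b"
| mult_a: "f \<in> markov_group a b \<Longrightarrow> a \<circ> f \<in> markov_group a b"
| mult_b: "f \<in> markov_group a b \<Longrightarrow> b \<circ> f \<in> markov_group a b"
| mult_a_inv: "f \<in> markov_group a b \<Longrightarrow> inv_into S1 a \<circ> f \<in> markov_group a b"
| mult_b_inv: "f \<in> markov_group a b \<Longrightarrow> inv_into S1 b \<circ> f \<in> markov_group a b"

definition X_infty :: "(complex \<Rightarrow> complex) \<Rightarrow> (complex \<Rightarrow> complex) \<Rightarrow> complex set \<Rightarrow> complex set" where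
  "X_infty a b X = (\<Inter>f\<in>markov_group a b. {x \<in> S1. f x \<in> X})"

end

theory Submission
  imports Defs
begin

text \<open>Write \<open>X = [a] \<union> [b] \<union> [b\<^sup>-\<^sup>1]\<close>. Every element of the group is a word alternating
  between \<open>a\<close> and \<open>b\<^sup>\<plusminus>\<^sup>1\<close>, and by (C) and (D) such a word plays ping-pong: it maps a gap
  of \<open>X\<close> onto a gap of \<open>X\<close> or into \<open>X\<close>. Hence the endpoints of the gaps of \<open>X\<close> lie in
  \<open>X\<^sub>\<infinity>\<close>, every gap of \<open>X\<close> is a gap of \<open>X\<^sub>\<infinity>\<close>, and every gap of \<open>X\<^sub>\<infinity>\<close> is carried onto
  a gap of \<open>X\<close> by the group element that pushes one of its points out of \<open>X\<close>. A gap of \<open>X\<close>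
  is bounded by two intervals of different types (B), so it is principal or complementary;
  \<open>b\<^sup>2\<close> carries a complementary gap to a principal one, and the principal gaps form a single
  orbit by the connectivity in (E).\<close>

section \<open>Arcs of the circle\<close>

lemma sin_double_sum_identity:
  fixes x y :: real
  shows "sin (2*y - 2*x) + sin (2*x) - sin (2*y) = 4 * sin x * sin y * sin (y - x)"
proof -
  have double: "2*y - 2*x = 2*(y-x)" by simp
  have "(sin x)^2 + (cos x)^2 = 1" "(sin y)^2 + (cos y)^2 = 1" by simp_all
  then show ?thesis unfolding double sin_double sin_diff cos_diff by algebra
qed

lemma sin_triangle_pos_iff:
  fixes s t :: real
  assumes "0 \<le> s" "s < 2*pi" "0 < t" "t < 2*pi"
  shows "sin (t - s) + sin s - sin t > 0 \<longleftrightarrow> 0 < s \<and> s < t"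
proof -
  have eq: "sin (t - s) + sin s - sin t = 4 * sin (s/2) * sin (t/2) * sin (t/2 - s/2)"
    using sin_double_sum_identity[where x="s/2" and y="t/2"] by simp
  have "sin (t/2) > 0" using assms by (intro sin_gt_zero) auto
  moreover have "0 < s \<Longrightarrow> sin (s/2) > 0" using assms by (intro sin_gt_zero) auto
  moreover have "s < t \<Longrightarrow> sin (t/2 - s/2) > 0" using assms by (intro sin_gt_zero) auto
  moreover have "sin (t/2 - s/2) \<le> 0" if "t \<le> s"
  proof -
    have "sin (s/2 - t/2) \<ge> 0" using assms that by (intro sin_ge_zero) auto
    then show ?thesis by (metis minus_diff_eq neg_0_le_iff_le sin_minus)
  qed
  ultimately show ?thesis
    using eq assms by (cases "s = 0"; cases "s < t") (auto simp: zero_less_mult_iff mult_less_0_iff)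
qed

lemma ccw_cis_iff: "ccw (cis r) (cis (r+s)) (cis (r+t)) \<longleftrightarrow> sin (t - s) + sin s - sin t > 0"
proof -
  have "cnj (cis (r+s) - cis r) * (cis (r+t) - cis r) =
     cis (-(r+s)) * cis (r+t) - cis (-(r+s)) * cis r - cis (-r) * cis (r+t) + cis (-r) * cis r"
    by (simp add: cis_cnj algebra_simps)
  also have "\<dots> = cis (t - s) - cis (-s) - cis t + 1"
    by (simp only: cis_mult) (simp add: algebra_simps)
  finally show ?thesis unfolding ccw_def by simp
qed

lemma Arg2pi_cis: "0 \<le> t \<Longrightarrow> t < 2*pi \<Longrightarrow> Arg2pi (cis t) = t"
  using Arg2pi_exp[of "\<i> * of_real t"] by (simp add: cis_conv_exp)

lemma S1_eq_cis_image: "S1 = cis ` {0..<2*pi}"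
proof
  show "S1 \<subseteq> cis ` {0..<2*pi}"
  proof
    fix z assume "z \<in> S1"
    then have "z = cis (Arg2pi z)"
      using Arg2pi_eq[of z] by (simp add: S1_def cis_conv_exp)
    then show "z \<in> cis ` {0..<2*pi}" using Arg2pi by auto
  qed
qed (auto simp: S1_def)

lemma S1_eq_rotated_cis_image: "S1 = (\<lambda>s. cis (r+s)) ` {0..<2*pi}"
proof -
  have "S1 = (\<lambda>z. cis r * z) ` S1"
  proof
    show "S1 \<subseteq> (\<lambda>z. cis r * z) ` S1"
    proof
      fix z assume "z \<in> S1"
      then have "cis (-r) * z \<in> S1" "z = cis r * (cis (-r) * z)"
        by (simp_all add: S1_def norm_mult cis_mult flip: mult.assoc)
      then show "z \<in> (\<lambda>z. cis r * z) ` S1" by blast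
    qed
  qed (auto simp: S1_def norm_mult)
  also have "\<dots> = (\<lambda>s. cis (r+s)) ` {0..<2*pi}"
    unfolding S1_eq_cis_image image_image by (simp add: cis_mult)
  finally show ?thesis .
qed

lemma inj_on_rotated_cis: "inj_on (\<lambda>s. cis (r+s)) {0..<2*pi}"
proof
  fix s t assume st: "s \<in> {0..<2*pi}" "t \<in> {0..<2*pi}" "cis (r+s) = cis (r+t)"
  then have "cis s = cis t" by (metis add_diff_cancel_left' cis_divide)
  then show "s = t" using st Arg2pi_cis by (metis atLeastLessThan_iff)
qed

lemma carc_rotated_cis_param:
  assumes u: "u \<in> S1" and v: "v \<in> S1" and uv: "u \<noteq> v"
  obtains r t where "carc u v = (\<lambda>s. cis (r+s)) ` {0..t}"
    "S1 - carc u v = (\<lambda>s. cis (r+s)) ` {t<..<2*pi}"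
proof -
  obtain r where r: "u = cis r" using u S1_eq_cis_image by blast
  let ?c = "\<lambda>s. cis (r+s)"
  have S1: "S1 = ?c ` {0..<2*pi}" by (rule S1_eq_rotated_cis_image)
  have "v \<in> ?c ` {0..<2*pi}" using v S1 by simp
  then obtain t where t: "0 \<le> t" "t < 2*pi" "v = ?c t" by auto
  have u0: "u = ?c 0" using r by simp
  have "t \<noteq> 0" using t u0 uv by auto
  have inj: "?c s = ?c s' \<longleftrightarrow> s = s'" if "s \<in> {0..<2*pi}" "s' \<in> {0..<2*pi}" for s s'
    using inj_on_rotated_cis[of r] that by (auto dest: inj_onD)
  have in_arc: "?c s \<in> carc u v \<longleftrightarrow> s \<le> t" if s: "0 \<le> s" "s < 2*pi" for s
  proof -
    have "ccw u (?c s) v \<longleftrightarrow> 0 < s \<and> s < t"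
      using ccw_cis_iff[of r s t] sin_triangle_pos_iff[of s t] s t \<open>t \<noteq> 0\<close> r by simp
    then show ?thesis
      unfolding carc_def u0 t(3) using inj[of s 0] inj[of s t] s t by (auto simp: S1_def)
  qed
  have arc: "carc u v = ?c ` {0..t}"
  proof
    show "carc u v \<subseteq> ?c ` {0..t}"
    proof
      fix z assume z: "z \<in> carc u v"
      then have "z \<in> ?c ` {0..<2*pi}" using S1 by (simp add: carc_def)
      then obtain s where "s \<in> {0..<2*pi}" "z = ?c s" by blast
      then show "z \<in> ?c ` {0..t}" using in_arc z by auto
    qed
    show "?c ` {0..t} \<subseteq> carc u v" using in_arc t by auto
  qed
  have "S1 - carc u v = ?c ` ({0..<2*pi} - {0..t})"
    unfolding arc S1 using t by (intro inj_on_image_set_diff[symmetric, OF inj_on_rotated_cis]) auto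
  also have "{0..<2*pi} - {0..t} = {t<..<2*pi}" using t by auto
  finally have rest: "S1 - carc u v = ?c ` {t<..<2*pi}" .
  show thesis using that[OF arc rest] .
qed

lemma continuous_on_rotated_cis: "continuous_on S (\<lambda>s. cis (r+s))"
  unfolding cis_conv_exp by (intro continuous_intros)

lemma is_closed_intervalD:
  assumes "is_closed_interval I"
  shows "compact I" "connected I" "connected (S1 - I)" "I \<subseteq> S1"
proof -
  obtain u v where uv: "u \<in> S1" "v \<in> S1" "u \<noteq> v" "I = carc u v"
    using assms by (auto simp: is_closed_interval_def)
  obtain r t where arc: "I = (\<lambda>s. cis (r+s)) ` {0..t}"
    and rest: "S1 - I = (\<lambda>s. cis (r+s)) ` {t<..<2*pi}"
    using carc_rotated_cis_param[OF uv(1-3)] uv(4) by metis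
  show "compact I" unfolding arc
    by (intro compact_continuous_image continuous_on_rotated_cis compact_Icc)
  show "connected I" unfolding arc
    by (intro connected_continuous_image continuous_on_rotated_cis connected_Icc)
  show "connected (S1 - I)" unfolding rest
    by (intro connected_continuous_image continuous_on_rotated_cis) (simp add: is_interval_connected)
  show "I \<subseteq> S1" using uv by (auto simp: carc_def)
qed

section \<open>Components and homeomorphisms\<close>

lemma homeomorphism_right_inverse:
  assumes "homeomorphism S T f g" "\<And>y. y \<in> T \<Longrightarrow> h y \<in> S" "\<And>y. y \<in> T \<Longrightarrow> f (h y) = y"
  shows "homeomorphism S T f h"
proof (rule homeomorphism_cong[OF assms(1) refl refl refl])
  fix y assume "y \<in> T"
  then show "h y = g y" using assms by (metis homeomorphism_apply1)
qed

lemma S1_locally_connected: "locally connected S1"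
  unfolding S1_def by (rule locally_connected_sphere)

lemma S1_connected: "connected S1"
  unfolding S1_def by (rule connected_sphere) simp

lemma homeomorphism_image_Diff:
  assumes h: "homeomorphism S T h h'" and Y: "Y \<subseteq> S"
  shows "h ` (S - Y) = T - h ` Y"
proof -
  have "inj_on h S" using h by (rule inj_on_inverseI[OF homeomorphism_apply1])
  then show ?thesis
    using inj_on_image_set_diff[of h S S Y] Y homeomorphism_image1[OF h] by simp
qed

lemma components_homeomorphism_image:
  assumes h: "homeomorphism S T h h'" and C: "C \<in> components S"
  shows "h ` C \<in> components T"
proof -
  obtain x where "x \<in> S" "C = connected_component_set S x" using C by (auto simp: components_iff)
  then show ?thesis
    using connected_component_set_homeomorphism[OF h] homeomorphism_image1[OF h]
    by (metis components_iff imageI)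
qed

lemma components_homeomorphism_image_subset:
  assumes h: "homeomorphism S T h h'" and "U \<subseteq> S" "C \<in> components U"
  shows "h ` C \<in> components (h ` U)"
  using components_homeomorphism_image[OF homeomorphism_of_subsets[OF h assms(2) order_refl refl]]
    assms(3) .

lemma openin_component_Diff_closed:
  assumes "locally connected S" "closed Y" "G \<in> components (S - Y)"
  shows "openin (top_of_set S) G"
proof -
  have "openin (top_of_set S) (S - Y)"
    unfolding openin_open using assms(2) by (intro exI[of _ "- Y"]) (auto simp: open_Compl)
  then show ?thesis using assms locally_connected_open_component by blast
qed

lemma closure_component_Diff_closed:
  assumes S: "locally connected S" and Y: "closed Y" and G: "G \<in> components (S - Y)"
  shows "(S - Y) \<inter> closure G = G"
proof
  show "G \<subseteq> (S - Y) \<inter> closure G" using G in_components_subset closure_subset by blast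
  show "(S - Y) \<inter> closure G \<subseteq> G"
  proof
    fix p assume p: "p \<in> (S - Y) \<inter> closure G"
    define H where "H = connected_component_set (S - Y) p"
    have H: "H \<in> components (S - Y)" using p by (simp add: H_def componentsI)
    then obtain W where W: "open W" "H = S \<inter> W"
      using openin_component_Diff_closed[OF S Y] by (meson openin_open)
    have "p \<in> H" using p by (simp add: H_def)
    then have "p \<in> W" using W by blast
    then have "W \<inter> G \<noteq> {}" using p W(1) open_Int_closure_eq_empty by blast
    then have "H \<inter> G \<noteq> {}" using W G in_components_subset by blast
    then have "H = G" using H G components_nonoverlap by blast
    then show "p \<in> G" using \<open>p \<in> H\<close> by simp
  qed
qed

lemma components_Diff_antimono:
  assumes S: "locally connected S" and Y: "closed Y" "Z \<subseteq> Y" and G: "G \<in> components (S - Y)"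
    and boundary: "S \<inter> closure G \<subseteq> G \<union> Z"
  shows "G \<in> components (S - Z)"
proof -
  have GZ: "G \<subseteq> S - Z" using G Y(2) in_components_subset by blast
  have "G \<noteq> {}" "connected G" using G in_components_nonempty in_components_connected by auto
  then obtain K where K: "K \<in> components (S - Z)" "G \<subseteq> K"
    using exists_component_superset[OF GZ] GZ by blast
  have KS: "K \<subseteq> S - Z" using K in_components_subset by blast
  have "openin (top_of_set K) G"
    using openin_subset_trans[OF openin_component_Diff_closed[OF S Y(1) G]] K(2) KS by blast
  moreover have "K \<inter> closure G = G" using K(2) KS boundary closure_subset by blast
  then have "closedin (top_of_set K) G" unfolding closedin_closed by (metis closed_closure)
  ultimately have "G = K"
    using K in_components_connected G in_components_nonempty unfolding connected_clopen by blast
  then show ?thesis using K by simp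
qed

lemma components_Union_subset_components:
  assumes "\<C> \<subseteq> components U"
  shows "components (\<Union>\<C>) = \<C>"
proof
  have "\<Union>\<C> \<subseteq> U" using assms in_components_subset by blast
  then show C: "\<C> \<subseteq> components (\<Union>\<C>)"
    using assms components_intermediate_subset by (metis Sup_upper subsetI subset_iff)
  show "components (\<Union>\<C>) \<subseteq> \<C>"
  proof
    fix D assume D: "D \<in> components (\<Union>\<C>)"
    then obtain x C where "x \<in> D" "x \<in> C" "C \<in> \<C>"
      using in_components_nonempty in_components_subset by blast
    then show "D \<in> \<C>" using C D components_nonoverlap by blast
  qed
qed

lemma connected_component_set_Un_closed:
  assumes "closed P" "closed Q" "P \<inter> Q = {}" "x \<in> P"
  shows "connected_component_set (P \<union> Q) x = connected_component_set P x"
proof -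
  let ?C = "connected_component_set (P \<union> Q) x"
  have "?C \<subseteq> P \<union> Q" "x \<in> ?C" using assms(4) connected_component_subset by auto
  then have "Q \<inter> ?C = {}"
    using connected_closedD[of ?C P Q] assms by blast
  then have "?C \<subseteq> P" using \<open>?C \<subseteq> P \<union> Q\<close> by blast
  then show ?thesis by (simp add: connected_component_intermediate_subset)
qed

lemma union_of_intervalsD:
  assumes "union_of_intervals k A"
  shows "closed A" "A \<subseteq> S1" "p \<in> A \<Longrightarrow> is_closed_interval (connected_component_set A p)"
proof -
  obtain \<I> where I: "finite \<I>" "\<forall>I\<in>\<I>. is_closed_interval I" "pairwise disjnt \<I>" "A = \<Union>\<I>"
    using assms by (auto simp: union_of_intervals_def)
  have closed: "closed (\<Union>\<J>)" if "\<J> \<subseteq> \<I>" for \<J>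
    using that I(1,2) is_closed_intervalD(1)
    by (intro closed_Union) (auto intro: finite_subset compact_imp_closed)
  show "closed A" using closed I(4) by blast
  show "A \<subseteq> S1" using I is_closed_intervalD(4) by blast
  assume "p \<in> A"
  then obtain I0 where I0: "I0 \<in> \<I>" "p \<in> I0" using I by blast
  have "A = I0 \<union> \<Union>(\<I> - {I0})" using I0 I(4) by blast
  moreover have "I0 \<inter> \<Union>(\<I> - {I0}) = {}"
    using I(3) I0(1) by (auto simp: pairwise_def disjnt_def)
  ultimately have "connected_component_set A p = connected_component_set I0 p"
    using connected_component_set_Un_closed[of I0 "\<Union>(\<I> - {I0})" p]
      closed[of "{I0}"] closed[of "\<I> - {I0}"] I0 by simp
  also have "\<dots> = I0"
    using is_closed_intervalD(2) I(2) I0 by (simp add: connected_component_eq_self)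
  finally show "is_closed_interval (connected_component_set A p)" using I(2) I0 by simp
qed

section \<open>Words in the generators\<close>

lemma markov_group_comp:
  "f \<in> markov_group a b \<Longrightarrow> g \<in> markov_group a b \<Longrightarrow> f \<circ> g \<in> markov_group a b"
  by (induction f rule: markov_group.induct) (auto simp: comp_assoc intro: markov_group.intros)

lemma markov_group_a: "a \<in> markov_group a b"
  and markov_group_b: "b \<in> markov_group a b"
  and markov_group_b_inv: "inv_into S1 b \<in> markov_group a b"
  using markov_group.intros(2,3,5)[OF markov_group.id] by simp_all

text \<open>\<open>Lbb\<close> stands for \<open>b\<^sup>2 = b\<^sup>-\<^sup>1\<close>.\<close>
datatype letter = La | Lb | Lbb

fun eval_word ::
  "(complex \<Rightarrow> complex) \<Rightarrow> (complex \<Rightarrow> complex) \<Rightarrow> letter list \<Rightarrow> complex \<Rightarrow> complex"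
where
  "eval_word a b [] x = x"
| "eval_word a b (La # w) x = a (eval_word a b w x)"
| "eval_word a b (Lb # w) x = b (eval_word a b w x)"
| "eval_word a b (Lbb # w) x = b (b (eval_word a b w x))"

lemma eval_word_Cons: "eval_word a b (l # w) x = eval_word a b [l] (eval_word a b w x)"
  by (cases l) simp_all

fun alternating :: "letter list \<Rightarrow> bool" where
  "alternating (l1 # l2 # w) \<longleftrightarrow> (l1 = La) \<noteq> (l2 = La) \<and> alternating (l2 # w)"
| "alternating _ \<longleftrightarrow> True"

text \<open>Left multiplication by a letter, reduced with the relations \<open>a\<^sup>2 = b\<^sup>3 = 1\<close>.\<close>
fun mult_letter :: "letter \<Rightarrow> letter list \<Rightarrow> letter list" where
  "mult_letter La (La # w) = w"
| "mult_letter Lb (Lb # w) = Lbb # w"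
| "mult_letter Lb (Lbb # w) = w"
| "mult_letter Lbb (Lb # w) = w"
| "mult_letter Lbb (Lbb # w) = Lb # w"
| "mult_letter l w = l # w"

lemma alternating_Cons_tl: "alternating (l # w) \<Longrightarrow> alternating w"
  by (cases w) auto

lemma alternating_mult_letter:
  assumes "alternating w" shows "alternating (mult_letter l w)"
proof (cases w)
  case (Cons l' w')
  then show ?thesis
    using assms by (cases l; cases l'; cases w') (auto dest: alternating_Cons_tl)
qed (cases l; simp)

locale involution_and_order_three =
  fixes a b :: "complex \<Rightarrow> complex"
  assumes homeomorphism_a: "homeomorphism S1 S1 a a"
    and homeomorphism_b: "homeomorphism S1 S1 b (b \<circ> b)"
begin

lemma a_in_S1: "x \<in> S1 \<Longrightarrow> a x \<in> S1"
  and b_in_S1: "x \<in> S1 \<Longrightarrow> b x \<in> S1"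
  and a_a: "x \<in> S1 \<Longrightarrow> a (a x) = x"
  and b_b_b: "x \<in> S1 \<Longrightarrow> b (b (b x)) = x"
  using homeomorphism_a homeomorphism_b by (auto simp: homeomorphism_def)

lemma inv_into_a: "x \<in> S1 \<Longrightarrow> inv_into S1 a x = a x"
  using inv_into_f_f[of a S1 "a x"] inj_on_inverseI[of S1 a a] a_a a_in_S1 by metis

lemma homeomorphism_inv_a: "homeomorphism S1 S1 (inv_into S1 a) a"
  using homeomorphism_a by (rule homeomorphism_cong) (simp_all add: inv_into_a)

lemma inv_into_b:
  assumes "x \<in> S1" shows "inv_into S1 b x = b (b x)"
proof -
  have "inj_on b S1" using homeomorphism_b by (rule inj_on_inverseI[OF homeomorphism_apply1])
  then show ?thesis using inv_into_f_f[of b S1 "b (b x)"] b_b_b b_in_S1 assms by simp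
qed

lemma homeomorphism_inv_b: "homeomorphism S1 S1 (inv_into S1 b) b"
  using homeomorphism_symD[OF homeomorphism_b]
  by (rule homeomorphism_cong) (simp_all add: inv_into_b)

lemma markov_group_homeomorphism:
  "f \<in> markov_group a b \<Longrightarrow> \<exists>g \<in> markov_group a b. homeomorphism S1 S1 f g"
proof (induction f rule: markov_group.induct)
  case id
  have "homeomorphism S1 S1 id id" using homeomorphism_ident by (simp add: id_def)
  then show ?case using markov_group.id by blast
next
  case (mult_a f)
  then obtain g where "g \<in> markov_group a b" "homeomorphism S1 S1 f g" by blast
  then show ?case
    using homeomorphism_compose[OF _ homeomorphism_a] markov_group_comp[OF _ markov_group_a] by blast
next
  case (mult_b f)
  then obtain g where "g \<in> markov_group a b" "homeomorphism S1 S1 f g" by blast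
  then show ?case
    using homeomorphism_compose[OF _ homeomorphism_b]
      markov_group_comp[OF _ markov_group_comp[OF markov_group_b markov_group_b]] by blast
next
  case (mult_a_inv f)
  then obtain g where "g \<in> markov_group a b" "homeomorphism S1 S1 f g" by blast
  then show ?case
    using homeomorphism_compose[OF _ homeomorphism_inv_a] markov_group_comp[OF _ markov_group_a] by blast
next
  case (mult_b_inv f)
  then obtain g where "g \<in> markov_group a b" "homeomorphism S1 S1 f g" by blast
  then show ?case
    using homeomorphism_compose[OF _ homeomorphism_inv_b] markov_group_comp[OF _ markov_group_b] by blast
qed

lemma markov_group_in_S1: "f \<in> markov_group a b \<Longrightarrow> x \<in> S1 \<Longrightarrow> f x \<in> S1"
  using markov_group_homeomorphism by (metis homeomorphism_image1 image_eqI)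

lemma markov_group_image_closure:
  assumes "f \<in> markov_group a b" "S \<subseteq> S1"
  shows "f ` closure S \<subseteq> closure (f ` S)"
proof -
  obtain g where g: "homeomorphism S1 S1 f g" using markov_group_homeomorphism assms(1) by blast
  have "closure S \<subseteq> S1" using assms(2) closure_minimal[of S S1] by (simp add: S1_def)
  then show ?thesis
    by (intro image_closure_subset closure_subset continuous_on_subset[OF homeomorphism_cont1[OF g]]) auto
qed

lemma eval_word_in_S1: "x \<in> S1 \<Longrightarrow> eval_word a b w x \<in> S1"
proof (induction w)
  case (Cons l w)
  then show ?case by (cases l) (simp_all add: a_in_S1 b_in_S1)
qed simp

lemma eval_word_mult_letter:
  assumes "x \<in> S1" shows "eval_word a b (mult_letter l w) x = eval_word a b [l] (eval_word a b w x)"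
proof (cases w)
  case (Cons l' w')
  then have y: "eval_word a b w' x \<in> S1" using eval_word_in_S1 assms by blast
  show ?thesis using Cons a_a[OF y] b_b_b[OF y] by (cases l; cases l') auto
qed (cases l; simp)

lemma alternating_word_mult_generator:
  assumes "alternating w" "\<forall>x\<in>S1. f x = eval_word a b w x" "\<forall>x\<in>S1. g x = eval_word a b [l] x"
  shows "\<exists>w'. alternating w' \<and> (\<forall>x\<in>S1. (g \<circ> f) x = eval_word a b w' x)"
  using assms alternating_mult_letter[of w l] eval_word_mult_letter[of _ l w] eval_word_in_S1
  by (intro exI[of _ "mult_letter l w"]) auto

lemma markov_group_alternating_word:
  "f \<in> markov_group a b \<Longrightarrow> \<exists>w. alternating w \<and> (\<forall>x\<in>S1. f x = eval_word a b w x)"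
proof (induction f rule: markov_group.induct)
  case id
  show ?case by (intro exI[of _ "[]"]) simp
next
  case (mult_a f)
  then show ?case using alternating_word_mult_generator[of _ f a La] by auto
next
  case (mult_b f)
  then show ?case using alternating_word_mult_generator[of _ f b Lb] by auto
next
  case (mult_a_inv f)
  then show ?case using alternating_word_mult_generator[of _ f _ La] inv_into_a by auto
next
  case (mult_b_inv f)
  then show ?case using alternating_word_mult_generator[of _ f _ Lbb] inv_into_b by auto
qed

definition same_orbit :: "complex set \<Rightarrow> complex set \<Rightarrow> bool" where
  "same_orbit S T \<longleftrightarrow> (\<exists>f\<in>markov_group a b. f ` S = T)"

lemma same_orbit_image: "f \<in> markov_group a b \<Longrightarrow> same_orbit S (f ` S)"
  unfolding same_orbit_def by blast

lemma same_orbit_refl: "same_orbit S S"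
  using same_orbit_image[OF markov_group.id] by simp

lemma same_orbit_trans: "same_orbit S T \<Longrightarrow> same_orbit T U \<Longrightarrow> same_orbit S U"
  unfolding same_orbit_def by (metis markov_group_comp image_comp)

lemma same_orbit_sym:
  assumes "S \<subseteq> S1" "same_orbit S T" shows "same_orbit T S"
proof -
  obtain f where f: "f \<in> markov_group a b" "f ` S = T" using assms(2) by (auto simp: same_orbit_def)
  obtain g where g: "g \<in> markov_group a b" "homeomorphism S1 S1 f g"
    using markov_group_homeomorphism[OF f(1)] by blast
  have "g ` T = (\<lambda>x. g (f x)) ` S" using f(2) by (auto simp: image_image)
  also have "\<dots> = S" using g(2) assms(1) by (auto simp: homeomorphism_apply1 subset_iff)
  finally have "g ` T = S" .
  then show ?thesis using same_orbit_image[OF g(1), of T] by simp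
qed

end

section \<open>Ping-pong in a Markov system\<close>

locale markov =
  fixes a b :: "complex \<Rightarrow> complex" and A B Bi :: "complex set"
  assumes markov_system: "markov_system a b A B Bi"
begin

abbreviation X where "X \<equiv> A \<union> B \<union> Bi"
abbreviation X_inf where "X_inf \<equiv> X_infty a b X"

sublocale involution_and_order_three a b
proof -
  obtain ga gb where a: "homeomorphism S1 S1 a ga" and b: "homeomorphism S1 S1 b gb"
    and "\<forall>x\<in>S1. a (a x) = x" "\<forall>x\<in>S1. b (b (b x)) = x"
    using markov_system by (auto simp: markov_system_def homeo_plus_def)
  moreover have "a x \<in> S1" "b x \<in> S1" if "x \<in> S1" for x
    using a b that by (auto simp: homeomorphism_def)
  ultimately have "homeomorphism S1 S1 a a" "homeomorphism S1 S1 b (b \<circ> b)"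
    by (auto intro!: homeomorphism_right_inverse[OF a] homeomorphism_right_inverse[OF b])
  then show "involution_and_order_three a b" by unfold_locales
qed

lemma
  shows closed_A: "closed A" and closed_B: "closed B" and closed_Bi: "closed Bi"
    and A_subset_S1: "A \<subseteq> S1" and B_subset_S1: "B \<subseteq> S1" and Bi_subset_S1: "Bi \<subseteq> S1"
proof -
  obtain k where "union_of_intervals k A" "union_of_intervals k B" "union_of_intervals k Bi"
    using markov_system by (auto simp: markov_system_def)
  then show "closed A" "closed B" "closed Bi" "A \<subseteq> S1" "B \<subseteq> S1" "Bi \<subseteq> S1"
    using union_of_intervalsD(1,2) by blast+
qed

lemma disjoint_A_B: "A \<inter> B = {}" and disjoint_A_Bi: "A \<inter> Bi = {}" and disjoint_B_Bi: "B \<inter> Bi = {}"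
  using markov_system by (auto simp: markov_system_def disjnt_def)

lemma a_image_A: "a ` A = bblocks_union A B Bi"
  and b_image_A: "b ` A = B" and b_image_B: "b ` B = Bi"
  using markov_system by (simp_all add: markov_system_def)

lemma a_image_bblocks: "a ` bblocks_union A B Bi = A"
  using a_a A_subset_S1 unfolding a_image_A[symmetric] image_image by (simp add: subset_iff)

lemma b_image_Bi: "b ` Bi = A"
  using b_b_b A_subset_S1 unfolding b_image_B[symmetric] b_image_A[symmetric] image_image
  by (simp add: subset_iff)

lemma closed_X: "closed X"
  using closed_A closed_B closed_Bi by blast

lemma X_subset_S1: "X \<subseteq> S1"
  using A_subset_S1 B_subset_S1 Bi_subset_S1 by blast

lemma gap_subset: "G \<in> gaps X \<Longrightarrow> G \<subseteq> S1 - X"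
  unfolding gaps_def using in_components_subset by blast

lemma complementary_gap: "G \<in> complementary_gaps A B Bi \<Longrightarrow> G \<in> gaps X"
  by (simp add: complementary_gaps_def)

lemma bblocks_subset_S1: "bblocks_union A B Bi \<subseteq> S1"
  unfolding bblocks_union_def using B_subset_S1 Bi_subset_S1 complementary_gap gap_subset by blast

lemma b_image_gap:
  assumes "G \<in> gaps X" shows "b ` G \<in> gaps X"
proof -
  have "b ` (S1 - X) = S1 - X"
    using homeomorphism_image_Diff[OF homeomorphism_b X_subset_S1] b_image_A b_image_B b_image_Bi
    by (simp add: image_Un Un_ac)
  then show ?thesis
    using components_homeomorphism_image_subset[OF homeomorphism_b _ assms[unfolded gaps_def]]
    unfolding gaps_def by simp
qed

lemma a_image_complementary_gap: "G \<in> complementary_gaps A B Bi \<Longrightarrow> a ` G \<subseteq> A"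
  using a_image_bblocks unfolding bblocks_union_def by blast

text \<open>The gaps that are not complementary tile \<open>S1 - (A \<union> [[b]])\<close>, a set which \<open>a\<close>
  maps onto itself.\<close>
lemma a_image_gap:
  assumes G: "G \<in> gaps X" "G \<notin> complementary_gaps A B Bi"
  shows "a ` G \<in> gaps X"
proof -
  define \<P> where "\<P> = gaps X - complementary_gaps A B Bi"
  have "\<Union>\<P> = S1 - (A \<union> bblocks_union A B Bi)"
  proof
    have "G \<inter> C = {}" if "G \<in> \<P>" "C \<in> complementary_gaps A B Bi" for G C
      using that complementary_gap components_nonoverlap unfolding \<P>_def gaps_def by blast
    then show "\<Union>\<P> \<subseteq> S1 - (A \<union> bblocks_union A B Bi)"
      using gap_subset unfolding \<P>_def bblocks_union_def by blast
    show "S1 - (A \<union> bblocks_union A B Bi) \<subseteq> \<Union>\<P>"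
    proof
      fix x assume x: "x \<in> S1 - (A \<union> bblocks_union A B Bi)"
      then have "x \<in> S1 - X" by (auto simp: bblocks_union_def)
      then have "connected_component_set (S1 - X) x \<in> \<P>"
        using x unfolding \<P>_def gaps_def bblocks_union_def
        by (auto intro: componentsI)
      moreover have "x \<in> connected_component_set (S1 - X) x" using \<open>x \<in> S1 - X\<close> by simp
      ultimately show "x \<in> \<Union>\<P>" by blast
    qed
  qed
  moreover have "a ` (S1 - (A \<union> bblocks_union A B Bi)) = S1 - (A \<union> bblocks_union A B Bi)"
    using homeomorphism_image_Diff[OF homeomorphism_a] A_subset_S1 bblocks_subset_S1
      a_image_A a_image_bblocks by (auto simp: image_Un)
  moreover have "components (\<Union>\<P>) = \<P>"
    by (rule components_Union_subset_components) (auto simp: \<P>_def gaps_def)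
  ultimately show ?thesis
    using components_homeomorphism_image_subset[OF homeomorphism_a, of "\<Union>\<P>" G] G \<P>_def by auto
qed

lemma letter_image_gap:
  assumes G: "G \<in> gaps X"
  shows "eval_word a b [l] ` G \<in> gaps X \<or> (l = La \<and> eval_word a b [l] ` G \<subseteq> A)"
proof (cases l)
  case La
  then show ?thesis
    using a_image_gap[OF G] a_image_complementary_gap by (cases "G \<in> complementary_gaps A B Bi") auto
qed (use b_image_gap[OF G] b_image_gap[OF b_image_gap[OF G]] in \<open>auto simp: image_image\<close>)

lemma letter_image_subset_A: "S \<subseteq> A \<Longrightarrow> l \<noteq> La \<Longrightarrow> eval_word a b [l] ` S \<subseteq> B \<union> Bi"
  using b_image_A b_image_B by (cases l) auto

lemma a_image_subset_B_Bi: "S \<subseteq> B \<union> Bi \<Longrightarrow> a ` S \<subseteq> A"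
  using a_image_bblocks unfolding bblocks_union_def by blast

text \<open>Along an alternating word, a gap stays a gap until it is pushed into \<open>X\<close>,
  after which it alternates between \<open>A\<close> and \<open>B \<union> Bi\<close>.\<close>
lemma alternating_word_image_gap:
  assumes "alternating w" "G \<in> gaps X"
  shows "eval_word a b w ` G \<in> gaps X \<or>
    (w \<noteq> [] \<and> eval_word a b w ` G \<subseteq> (if hd w = La then A else B \<union> Bi))"
  using assms
proof (induction w)
  case (Cons l w)
  let ?S = "eval_word a b w ` G"
  have image: "eval_word a b (l # w) ` G = eval_word a b [l] ` ?S"
    unfolding image_image by (rule image_cong[OF refl eval_word_Cons])
  have alternates: "(l = La) \<noteq> (hd w = La)" if "w \<noteq> []"
    using Cons.prems(1) that by (cases w) auto
  from Cons.IH[OF alternating_Cons_tl[OF Cons.prems(1)] Cons.prems(2)] show ?case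
  proof
    assume "?S \<in> gaps X"
    then show ?thesis using letter_image_gap[of ?S l] image by auto
  next
    assume w: "w \<noteq> [] \<and> ?S \<subseteq> (if hd w = La then A else B \<union> Bi)"
    then show ?thesis
      using alternates letter_image_subset_A[of ?S l] a_image_subset_B_Bi[of ?S] image
      by (cases l) (auto split: if_splits)
  qed
qed simp

lemma markov_group_image_gap:
  assumes f: "f \<in> markov_group a b" and G: "G \<in> gaps X"
  shows "f ` G \<in> gaps X \<or> f ` G \<subseteq> X"
proof -
  obtain w where w: "alternating w" "\<forall>x\<in>S1. f x = eval_word a b w x"
    using markov_group_alternating_word[OF f] by blast
  have "f ` G = eval_word a b w ` G" using w(2) gap_subset[OF G] by (intro image_cong) auto
  then show ?thesis using alternating_word_image_gap[OF w(1) G] by (auto split: if_splits)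
qed

section \<open>The gaps of \<open>X\<^sub>\<infinity>\<close>\<close>

lemma X_inf_iff: "x \<in> X_inf \<longleftrightarrow> x \<in> S1 \<and> (\<forall>f\<in>markov_group a b. f x \<in> X)"
  unfolding X_infty_def using markov_group.id by blast

lemma X_inf_subset: "X_inf \<subseteq> X"
  using X_inf_iff markov_group.id by fastforce

lemma markov_group_X_inf_iff:
  assumes f: "f \<in> markov_group a b" and x: "x \<in> S1"
  shows "f x \<in> X_inf \<longleftrightarrow> x \<in> X_inf"
proof
  obtain g where g: "g \<in> markov_group a b" "homeomorphism S1 S1 f g"
    using markov_group_homeomorphism[OF f] by blast
  assume "f x \<in> X_inf"
  then have "(h \<circ> g) (f x) \<in> X" if "h \<in> markov_group a b" for h
    using that markov_group_comp[OF that g(1)] X_inf_iff by blast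
  then show "x \<in> X_inf"
    using g(2) x X_inf_iff by (simp add: homeomorphism_apply1)
next
  assume "x \<in> X_inf"
  then show "f x \<in> X_inf"
    using markov_group_comp[OF _ f] markov_group_in_S1[OF f x] X_inf_iff by (metis comp_apply)
qed

lemma markov_group_image_gap_X_inf:
  assumes f: "f \<in> markov_group a b" and J: "J \<in> gaps X_inf"
  shows "f ` J \<in> gaps X_inf"
proof -
  obtain g where g: "g \<in> markov_group a b" "homeomorphism S1 S1 f g"
    using markov_group_homeomorphism[OF f] by blast
  have "f ` (S1 - X_inf) = S1 - X_inf"
  proof
    show "f ` (S1 - X_inf) \<subseteq> S1 - X_inf"
      using markov_group_X_inf_iff[OF f] markov_group_in_S1[OF f] by auto
    show "S1 - X_inf \<subseteq> f ` (S1 - X_inf)"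
    proof
      fix y assume y: "y \<in> S1 - X_inf"
      then have "g y \<in> S1 - X_inf" "f (g y) = y"
        using markov_group_X_inf_iff[OF g(1)] markov_group_in_S1[OF g(1)] g(2)
        by (auto simp: homeomorphism_apply2)
      then show "y \<in> f ` (S1 - X_inf)" by force
    qed
  qed
  moreover have "f ` J \<in> components (f ` (S1 - X_inf))"
    using J unfolding gaps_def by (intro components_homeomorphism_image_subset[OF g(2)]) auto
  ultimately show ?thesis unfolding gaps_def by simp
qed

text \<open>By ping-pong a group element maps a gap of \<open>X\<close> onto a gap or into the closed set \<open>X\<close>;
  either way the image of an endpoint of the gap cannot lie in \<open>S1 - X\<close>.\<close>
lemma closure_gap_subset:
  assumes G: "G \<in> gaps X"
  shows "S1 \<inter> closure G \<subseteq> G \<union> X_inf"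
proof
  fix p assume p: "p \<in> S1 \<inter> closure G"
  show "p \<in> G \<union> X_inf"
  proof (rule ccontr)
    assume "p \<notin> G \<union> X_inf"
    then obtain f where f: "f \<in> markov_group a b" "f p \<notin> X"
      using p X_inf_iff by blast
    have "f p \<in> closure (f ` G)"
      using markov_group_image_closure[OF f(1) gap_subset[OF G, THEN subset_trans]] p by blast
    moreover have "f p \<in> S1" using markov_group_in_S1[OF f(1)] p by blast
    ultimately have "f p \<in> f ` G"
      using markov_group_image_gap[OF f(1) G] f(2) closure_minimal[OF _ closed_X]
        closure_component_Diff_closed[OF S1_locally_connected closed_X]
      unfolding gaps_def by blast
    then obtain q where q: "q \<in> G" "f q = f p" by (metis imageE)
    obtain g where "homeomorphism S1 S1 f g" using markov_group_homeomorphism[OF f(1)] by blast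
    then have "q = p" using q p gap_subset[OF G] by (metis DiffD1 IntD1 homeomorphism_apply1 subsetD)
    then show False using q \<open>p \<notin> G \<union> X_inf\<close> by blast
  qed
qed

lemma gap_in_gaps_X_inf: "G \<in> gaps X \<Longrightarrow> G \<in> gaps X_inf"
  unfolding gaps_def
  using components_Diff_antimono[OF S1_locally_connected closed_X X_inf_subset]
    closure_gap_subset gaps_def by blast

lemma gap_X_inf_same_orbit_gap:
  assumes J: "J \<in> gaps X_inf"
  obtains G where "G \<in> gaps X" "same_orbit J G"
proof -
  obtain y where y: "y \<in> J" "y \<in> S1 - X_inf"
    using J in_components_nonempty in_components_subset unfolding gaps_def by blast
  then obtain f where f: "f \<in> markov_group a b" "f y \<notin> X" using X_inf_iff by blast
  define G where "G = connected_component_set (S1 - X) (f y)"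
  have fy: "f y \<in> S1 - X" using f markov_group_in_S1 y by blast
  then have "G \<in> gaps X" unfolding G_def gaps_def by (rule componentsI)
  moreover have "f ` J = G"
    using components_nonoverlap[of "f ` J" "S1 - X_inf" G] fy y f(1) J
      markov_group_image_gap_X_inf gap_in_gaps_X_inf[OF \<open>G \<in> gaps X\<close>]
    unfolding gaps_def G_def by auto
  ultimately show thesis using that same_orbit_image[OF f(1)] by blast
qed

section \<open>Principal and complementary gaps\<close>

lemma connected_component_X:
  assumes "p \<in> X"
  obtains T where "T \<in> {A, B, Bi}" "p \<in> T" "connected_component_set X p = connected_component_set T p"
proof -
  have closed: "closed (B \<union> Bi)" "closed (A \<union> Bi)" "closed (A \<union> B)"
    using closed_A closed_B closed_Bi by blast+
  have disjoint: "A \<inter> (B \<union> Bi) = {}" "B \<inter> (A \<union> Bi) = {}" "Bi \<inter> (A \<union> B) = {}"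
    using disjoint_A_B disjoint_A_Bi disjoint_B_Bi by blast+
  have "X = A \<union> (B \<union> Bi)" "X = B \<union> (A \<union> Bi)" "X = Bi \<union> (A \<union> B)" by blast+
  then have "connected_component_set X p = connected_component_set A p" if "p \<in> A"
    using connected_component_set_Un_closed[OF closed_A closed(1) disjoint(1) that] by simp
  moreover have "connected_component_set X p = connected_component_set B p" if "p \<in> B"
    using connected_component_set_Un_closed[OF closed_B closed(2) disjoint(2) that] \<open>X = B \<union> (A \<union> Bi)\<close>
    by simp
  moreover have "connected_component_set X p = connected_component_set Bi p" if "p \<in> Bi"
    using connected_component_set_Un_closed[OF closed_Bi closed(3) disjoint(3) that] \<open>X = Bi \<union> (A \<union> B)\<close>
    by simp
  ultimately show thesis using that assms by blast
qed

lemma closed_interval_component_X: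
  assumes "p \<in> X" shows "is_closed_interval (connected_component_set X p)"
proof -
  obtain k where "union_of_intervals k A" "union_of_intervals k B" "union_of_intervals k Bi"
    using markov_system by (auto simp: markov_system_def)
  moreover obtain T where "T \<in> {A, B, Bi}" "p \<in> T"
    "connected_component_set X p = connected_component_set T p"
    using connected_component_X[OF assms] .
  ultimately show ?thesis using union_of_intervalsD(3) by auto
qed

text \<open>A gap cannot be bounded by a single interval of \<open>X\<close>: it would then fill the whole
  complement of that interval, which misses the other two nonempty parts of \<open>X\<close>.\<close>
lemma gap_between_components:
  assumes A: "A \<noteq> {}" and G: "G \<in> gaps X"
  shows "\<exists>p\<in>closure G \<inter> X. \<exists>q\<in>closure G \<inter> X.
    connected_component_set X p \<noteq> connected_component_set X q"
proof (rule ccontr)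
  assume "\<not> ?thesis"
  then have same: "connected_component_set X p = connected_component_set X q"
    if "p \<in> closure G \<inter> X" "q \<in> closure G \<inter> X" for p q
    using that by blast
  obtain I where I: "closure G \<inter> X \<subseteq> I" "I \<subseteq> X" "connected (S1 - I)"
    "I = {} \<or> (\<exists>T\<in>{A, B, Bi}. I \<subseteq> T)"
  proof (cases "closure G \<inter> X = {}")
    case True
    then show thesis using that[of "{}"] S1_connected by simp
  next
    case False
    then obtain p where p: "p \<in> closure G \<inter> X" by blast
    then have "p \<in> X" by blast
    show thesis
    proof (rule that[of "connected_component_set X p"])
      show "closure G \<inter> X \<subseteq> connected_component_set X p"
      proof
        fix q assume q: "q \<in> closure G \<inter> X"
        then have "q \<in> connected_component_set X q" by simp
        then show "q \<in> connected_component_set X p" using same[OF q p] by simp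
      qed
      show "connected (S1 - connected_component_set X p)"
        using is_closed_intervalD(3)[OF closed_interval_component_X[OF \<open>p \<in> X\<close>]] .
      obtain T where T: "T \<in> {A, B, Bi}" "p \<in> T" "connected_component_set X p = connected_component_set T p"
        by (rule connected_component_X[OF \<open>p \<in> X\<close>])
      then have "connected_component_set X p \<subseteq> T" using connected_component_subset by simp
      then show "connected_component_set X p = {} \<or> (\<exists>T\<in>{A, B, Bi}. connected_component_set X p \<subseteq> T)"
        using T(1) by blast
    qed (simp_all add: connected_component_subset)
  qed
  have G': "G \<in> components (S1 - X)" using G by (simp add: gaps_def)
  have "(S1 - X) \<inter> closure G = G"
    by (rule closure_component_Diff_closed[OF S1_locally_connected closed_X G'])
  then have "S1 \<inter> closure G \<subseteq> G \<union> I" using I(1) by blast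
  then have "G \<in> components (S1 - I)"
    by (rule components_Diff_antimono[OF S1_locally_connected closed_X I(2) G'])
  moreover have "components (S1 - I) = {S1 - I}"
    using I(3) calculation in_components_nonempty in_components_subset
    by (metis components_eq_sing_iff subset_empty)
  ultimately have "G = S1 - I" by simp
  then have "X \<subseteq> I" using gap_subset[OF G] X_subset_S1 by blast
  moreover have "B \<noteq> {}" "Bi \<noteq> {}" using A b_image_A b_image_B by auto
  ultimately have "\<not> I \<subseteq> T" if "T \<in> {A, B, Bi}" for T
    using that disjoint_A_B disjoint_A_Bi disjoint_B_Bi by blast
  then show False using I(4) \<open>X \<subseteq> I\<close> A by blast
qed

lemma connected_component_X_in_components:
  assumes "p \<in> X"
  shows "connected_component_set X p \<in> components A \<union> components B \<union> components Bi"
proof -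
  obtain T where "T \<in> {A, B, Bi}" "p \<in> T" "connected_component_set X p = connected_component_set T p"
    by (rule connected_component_X[OF assms])
  then show ?thesis using componentsI[of p T] by auto
qed

lemma gap_principal_or_complementary:
  assumes A: "A \<noteq> {}" and G: "G \<in> gaps X"
  shows "G \<in> principal_gaps A B Bi \<or> G \<in> complementary_gaps A B Bi"
proof -
  obtain p q where pq: "p \<in> closure G \<inter> X" "q \<in> closure G \<inter> X"
    "connected_component_set X p \<noteq> connected_component_set X q"
    using gap_between_components[OF A G] by blast
  define I1 where "I1 = connected_component_set X p"
  define I2 where "I2 = connected_component_set X q"
  have sides: "between G I1 I2" "between G I2 I1"
    using pq unfolding between_def I1_def I2_def by auto
  have types: "I1 \<in> components A \<union> components B \<union> components Bi"
    "I2 \<in> components A \<union> components B \<union> components Bi"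
    using connected_component_X_in_components pq unfolding I1_def I2_def by auto
  have "no_two_consecutive X A" "no_two_consecutive X B" "no_two_consecutive X Bi"
    using markov_system by (simp_all add: markov_system_def)
  then have not_same: "\<not> (I1 \<in> components T \<and> I2 \<in> components T)" if "T \<in> {A, B, Bi}" for T
    using that G sides(1) unfolding no_two_consecutive_def by blast
  have principal: "G \<in> principal_gaps A B Bi"
    if "J1 \<in> components A" "J2 \<in> components B \<union> components Bi" "between G J1 J2" for J1 J2
    using that G unfolding principal_gaps_def by blast
  have complementary: "G \<in> complementary_gaps A B Bi"
    if "J1 \<in> components B" "J2 \<in> components Bi" "between G J1 J2" for J1 J2
    using that G unfolding complementary_gaps_def by blast
  show ?thesis
    using types sides not_same[of A] not_same[of B] not_same[of Bi]
      principal[of I1 I2] principal[of I2 I1] complementary[of I1 I2] complementary[of I2 I1]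
    by blast
qed

lemma complementary_gap_same_orbit_principal:
  assumes C: "C \<in> complementary_gaps A B Bi"
  obtains P where "P \<in> principal_gaps A B Bi" "same_orbit C P"
proof -
  define f where "f = b \<circ> b"
  have f: "f \<in> markov_group a b" unfolding f_def using markov_group_comp[OF markov_group_b markov_group_b] .
  obtain g where hf: "homeomorphism S1 S1 f g" using markov_group_homeomorphism[OF f] by blast
  obtain I1 I2 where I: "I1 \<in> components B" "I2 \<in> components Bi" "between C I1 I2"
    using C by (auto simp: complementary_gaps_def)
  have "f ` B = A" "f ` Bi = B"
    unfolding f_def image_comp[symmetric] by (simp_all add: b_image_B b_image_Bi b_image_A)
  then have components: "f ` I1 \<in> components A" "f ` I2 \<in> components B"
    using components_homeomorphism_image_subset[OF hf B_subset_S1 I(1)]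
      components_homeomorphism_image_subset[OF hf Bi_subset_S1 I(2)] by simp_all
  have C_gap: "C \<in> gaps X" using C by (rule complementary_gap)
  have "f ` C \<in> gaps X" unfolding f_def image_comp[symmetric] using C_gap by (intro b_image_gap)
  moreover have "closure (f ` C) \<inter> f ` I1 \<noteq> {}" "closure (f ` C) \<inter> f ` I2 \<noteq> {}"
    using I(3) markov_group_image_closure[OF f gap_subset[OF C_gap, THEN subset_trans]]
    unfolding between_def by blast+
  moreover have "f ` I1 \<noteq> f ` I2"
  proof -
    have "f ` I1 \<subseteq> A" "f ` I2 \<subseteq> B" "f ` I1 \<noteq> {}"
      using components in_components_subset in_components_nonempty by blast+
    then show ?thesis using disjoint_A_B by blast
  qed
  ultimately have "between (f ` C) (f ` I1) (f ` I2)" unfolding between_def by blast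
  then have "f ` C \<in> principal_gaps A B Bi"
    using \<open>f ` C \<in> gaps X\<close> components unfolding principal_gaps_def by blast
  then show thesis using that same_orbit_image[OF f] by blast
qed

lemma principal_gaps_same_orbit:
  assumes J: "J \<in> principal_gaps A B Bi" and K: "K \<in> principal_gaps A B Bi"
  shows "same_orbit J K"
proof -
  define P where "P = principal_gaps A B Bi"
  define E where "E = {(J, a ` J) | J. J \<in> P} \<union> {(J, b ` J) | J. J \<in> P \<and> b ` J \<in> P}
    \<union> {(J, inv_into S1 b ` J) | J. J \<in> P \<and> inv_into S1 b ` J \<in> P}"
  have "\<forall>J\<in>P. \<forall>K\<in>P. (J, K) \<in> (E \<union> E\<inverse>)\<^sup>*"
    using markov_system unfolding markov_system_def Let_def P_def E_def by blast
  then have path: "(J, K) \<in> (E \<union> E\<inverse>)\<^sup>*" using J K P_def by blast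
  have "S \<subseteq> S1" if "S \<in> P" for S
    using that gap_subset X_subset_S1 unfolding P_def principal_gaps_def by blast
  then have edge: "same_orbit S T \<and> S \<subseteq> S1" if "(S, T) \<in> E" for S T
    using that same_orbit_image[OF markov_group_a] same_orbit_image[OF markov_group_b]
      same_orbit_image[OF markov_group_b_inv] unfolding E_def by blast
  from path show ?thesis
  proof (induction rule: rtrancl_induct)
    case (step S T)
    then have "same_orbit S T" using edge same_orbit_sym by blast
    then show ?case using step.IH same_orbit_trans by blast
  qed (rule same_orbit_refl)
qed

lemma gap_X_inf_same_orbit_principal:
  assumes A: "A \<noteq> {}" and J: "J \<in> gaps X_inf"
  obtains P where "P \<in> principal_gaps A B Bi" "same_orbit J P"
proof -
  obtain G where G: "G \<in> gaps X" "same_orbit J G"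
    using gap_X_inf_same_orbit_gap[OF J] by blast
  show thesis
    using gap_principal_or_complementary[OF A G(1)]
  proof
    assume "G \<in> principal_gaps A B Bi"
    then show thesis using that G(2) by blast
  next
    assume "G \<in> complementary_gaps A B Bi"
    then obtain P where "P \<in> principal_gaps A B Bi" "same_orbit G P"
      by (rule complementary_gap_same_orbit_principal)
    then show thesis using that G(2) same_orbit_trans by blast
  qed
qed

lemma gaps_X_inf_same_orbit:
  assumes A: "A \<noteq> {}" and J: "J \<in> gaps X_inf" and K: "K \<in> gaps X_inf"
  shows "same_orbit J K"
proof -
  obtain P where P: "P \<in> principal_gaps A B Bi" "same_orbit J P"
    using gap_X_inf_same_orbit_principal[OF A J] .
  obtain Q where Q: "Q \<in> principal_gaps A B Bi" "same_orbit K Q"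
    using gap_X_inf_same_orbit_principal[OF A K] .
  have "same_orbit Q K"
    using same_orbit_sym[OF _ Q(2)] K in_components_subset unfolding gaps_def by blast
  then show ?thesis
    using P principal_gaps_same_orbit[OF P(1) Q(1)] same_orbit_trans by blast
qed

lemma gaps_X_inf_nonempty:
  assumes A: "A \<noteq> {}" shows "gaps X_inf \<noteq> {}"
proof -
  have "\<not> S1 \<subseteq> X"
  proof
    assume S1: "S1 \<subseteq> X"
    have "A \<inter> (B \<union> Bi) \<inter> S1 = {}" using disjoint_A_B disjoint_A_Bi by blast
    moreover have "S1 \<subseteq> A \<union> (B \<union> Bi)" using S1 by blast
    moreover have "closed (B \<union> Bi)" using closed_B closed_Bi by blast
    ultimately have "A \<inter> S1 = {} \<or> (B \<union> Bi) \<inter> S1 = {}"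
      using connected_closedD[OF S1_connected _ _ closed_A] by blast
    moreover have "B \<noteq> {}" using A b_image_A by blast
    ultimately show False using A A_subset_S1 B_subset_S1 by blast
  qed
  then obtain x where "x \<in> S1 - X_inf" using X_inf_subset by blast
  then show ?thesis unfolding gaps_def using componentsI by blast
qed

text \<open>Condition (A) allows \<open>k = 0\<close>, i.e. \<open>X = {}\<close>.\<close>
lemma gaps_X_inf_degenerate:
  assumes "A = {}" shows "gaps X_inf = {S1}"
proof -
  have "X_inf = {}" using assms b_image_A b_image_B X_inf_subset by auto
  then show ?thesis
    unfolding gaps_def using S1_connected by (simp add: components_eq_sing_iff S1_def)
qed

end

theorem lemma10p8:
  assumes "markov_system a b A B Bi"
  shows "gaps (X_infty a b (A \<union> B \<union> Bi)) \<noteq> {} \<and>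
         (\<forall>J\<in>gaps (X_infty a b (A \<union> B \<union> Bi)). \<forall>K\<in>gaps (X_infty a b (A \<union> B \<union> Bi)).
            \<exists>f\<in>markov_group a b. f ` J = K)"
proof -
  interpret markov a b A B Bi using assms by (rule markov.intro)
  show ?thesis
  proof (cases "A = {}")
    case True
    then show ?thesis
      using gaps_X_inf_degenerate markov_group.id by (intro conjI ballI bexI[of _ id]) auto
  next
    case False
    then show ?thesis
      using gaps_X_inf_nonempty gaps_X_inf_same_orbit unfolding same_orbit_def by blast
  qed
qed

end
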